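(* If $\delta$ is a small perturbation of the DR data $(L,b)\underset{p}{\overset{i}{\rightleftarrows}}(M,b),\ h$, then the perturbed data $(L,b_1)\underset{p_1}{\overset{i_1}{\rightleftarrows}}(M,b+\delta),\ h_1$ is a DR if and only if $p\,(A h^{2} A + A h + h A)\,i = 0$.
   Context: An HE data (homotopy equivalence data) consists of two (co)chain complexes $(L,b)$, $(M,b)$, quasi-isomorphisms $i:L\to M$ and $p:M\to L$, and a homotopy $h$ on $M$ with $ip = 1 + bh + hb$. A DR (deformation retract) is an HE data which in addition satisfies $pi = 1$. A perturbation $\delta$ is a map on $M$ of the same degree as $b$ with $(b+\delta)^2=0$; it is small if $1-\delta h$ is invertible. In that case $A=(1-\delta h)^{-1}\delta$, and the perturbed data is $i_1 = i + hAi$, $p_1 = p + pAh$, $h_1 = h + hAh$, $b_1 = b + pAi$ (which is again an HE data by the main perturbation lemma). *)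

theory Defs
  imports Main
begin

text \<open>Complexes are modelled as abelian groups (Z-modules) with a square-zero
additive endomorphism (differential); all maps are additive. Maps are plain
HOL functions, composition is function composition.\<close>

definition additive :: "('a::ab_group_add \<Rightarrow> 'b::ab_group_add) \<Rightarrow> bool" where
  "additive f \<longleftrightarrow> (\<forall>x y. f (x + y) = f x + f y)"

definition is_differential :: "('a::ab_group_add \<Rightarrow> 'a) \<Rightarrow> bool" where
  "is_differential b \<longleftrightarrow> additive b \<and> (\<forall>x. b (b x) = 0)"

definition chain_map :: "('a::ab_group_add \<Rightarrow> 'a) \<Rightarrow> ('b::ab_group_add \<Rightarrow> 'b) \<Rightarrow> ('a \<Rightarrow> 'b) \<Rightarrow> bool" where
  "chain_map bL bM f \<longleftrightarrow> additive f \<and> (\<forall>x. f (bL x) = bM (f x))"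

text \<open>Quasi-isomorphism: a chain map inducing a bijection ker b / im b on homology
(injectivity and surjectivity of the induced map written out).\<close>
definition quasi_iso :: "('a::ab_group_add \<Rightarrow> 'a) \<Rightarrow> ('b::ab_group_add \<Rightarrow> 'b) \<Rightarrow> ('a \<Rightarrow> 'b) \<Rightarrow> bool" where
  "quasi_iso bL bM f \<longleftrightarrow> chain_map bL bM f
     \<and> (\<forall>z. bL z = 0 \<and> (\<exists>y. f z = bM y) \<longrightarrow> (\<exists>x. z = bL x))
     \<and> (\<forall>w. bM w = 0 \<longrightarrow> (\<exists>z. bL z = 0 \<and> (\<exists>y. f z - w = bM y)))"

definition HE_data :: "('l::ab_group_add \<Rightarrow> 'l) \<Rightarrow> ('m::ab_group_add \<Rightarrow> 'm) \<Rightarrow>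
    ('l \<Rightarrow> 'm) \<Rightarrow> ('m \<Rightarrow> 'l) \<Rightarrow> ('m \<Rightarrow> 'm) \<Rightarrow> bool" where
  "HE_data bL bM i p h \<longleftrightarrow> is_differential bL \<and> is_differential bM
     \<and> quasi_iso bL bM i \<and> quasi_iso bM bL p \<and> additive h
     \<and> (\<forall>x. i (p x) = x + bM (h x) + h (bM x))"

definition DR_data :: "('l::ab_group_add \<Rightarrow> 'l) \<Rightarrow> ('m::ab_group_add \<Rightarrow> 'm) \<Rightarrow>
    ('l \<Rightarrow> 'm) \<Rightarrow> ('m \<Rightarrow> 'l) \<Rightarrow> ('m \<Rightarrow> 'm) \<Rightarrow> bool" where
  "DR_data bL bM i p h \<longleftrightarrow> HE_data bL bM i p h \<and> (\<forall>x. p (i x) = x)"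

definition perturbation :: "('m::ab_group_add \<Rightarrow> 'm) \<Rightarrow> ('m \<Rightarrow> 'm) \<Rightarrow> bool" where
  "perturbation bM \<delta> \<longleftrightarrow> additive \<delta> \<and> is_differential (\<lambda>x. bM x + \<delta> x)"

definition small_perturbation :: "('m::ab_group_add \<Rightarrow> 'm) \<Rightarrow> ('m \<Rightarrow> 'm) \<Rightarrow> ('m \<Rightarrow> 'm) \<Rightarrow> bool" where
  "small_perturbation bM h \<delta> \<longleftrightarrow> perturbation bM \<delta> \<and> bij (\<lambda>x. x - \<delta> (h x))"

definition pert_A :: "('m::ab_group_add \<Rightarrow> 'm) \<Rightarrow> ('m \<Rightarrow> 'm) \<Rightarrow> 'm \<Rightarrow> 'm" where
  "pert_A h \<delta> = (\<lambda>x. inv (\<lambda>y. y - \<delta> (h y)) (\<delta> x))"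

definition pert_i :: "('l \<Rightarrow> 'm::ab_group_add) \<Rightarrow> ('m \<Rightarrow> 'm) \<Rightarrow> ('m \<Rightarrow> 'm) \<Rightarrow> 'l \<Rightarrow> 'm" where
  "pert_i i h \<delta> = (\<lambda>x. i x + h (pert_A h \<delta> (i x)))"

definition pert_p :: "('m::ab_group_add \<Rightarrow> 'l::ab_group_add) \<Rightarrow> ('m \<Rightarrow> 'm) \<Rightarrow> ('m \<Rightarrow> 'm) \<Rightarrow> 'm \<Rightarrow> 'l" where
  "pert_p p h \<delta> = (\<lambda>x. p x + p (pert_A h \<delta> (h x)))"

definition pert_h :: "('m::ab_group_add \<Rightarrow> 'm) \<Rightarrow> ('m \<Rightarrow> 'm) \<Rightarrow> 'm \<Rightarrow> 'm" where
  "pert_h h \<delta> = (\<lambda>x. h x + h (pert_A h \<delta> (h x)))"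

definition pert_bL :: "('l::ab_group_add \<Rightarrow> 'l) \<Rightarrow> ('l \<Rightarrow> 'm::ab_group_add) \<Rightarrow> ('m \<Rightarrow> 'l)
    \<Rightarrow> ('m \<Rightarrow> 'm) \<Rightarrow> ('m \<Rightarrow> 'm) \<Rightarrow> 'l \<Rightarrow> 'l" where
  "pert_bL bL i p h \<delta> = (\<lambda>x. bL x + p (pert_A h \<delta> (i x)))"

end

theory Submission
  imports Defs
begin

text \<open>Everything rests on one identity for \<open>A = (1 - \<delta>h)\<^sup>-\<^sup>1\<delta>\<close>: for any additive \<open>h\<close>,
\<open>bA + A(b + (1 + bh + hb)A) = 0\<close>, because applying the injective map \<open>1 - \<delta>h\<close> to the
left-hand side precomposed with the bijection \<open>1 - h\<delta>\<close> yields \<open>(b + \<delta>)\<^sup>2 - b\<^sup>2 = 0\<close>.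
For HE data \<open>1 + bh + hb = ip\<close>, so \<open>bA + Ab + AipA = 0\<close>, and together with \<open>A = \<delta> + \<delta>hA = \<delta> + Ah\<delta>\<close>
this makes the perturbed maps chain maps and the perturbed \<open>h\<^sub>1\<close> a homotopy from \<open>i\<^sub>1p\<^sub>1\<close> to \<open>1\<close>.
Expanding \<open>p\<^sub>1i\<^sub>1\<close> gives \<open>pi + p(Ah\<^sup>2A + Ah + hA)i\<close>, so \<open>p\<^sub>1i\<^sub>1 = 1\<close> is exactly the stated condition
when \<open>pi = 1\<close>; and the data of a deformation retract already force \<open>i\<^sub>1\<close>, \<open>p\<^sub>1\<close> to be
quasi-isomorphisms.\<close>

lemma additive_add: "additive f \<Longrightarrow> f (x + y) = f x + f y"
  unfolding additive_def by blast

lemma additive_zero: "additive f \<Longrightarrow> f 0 = 0"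
  using additive_add[of f 0 0] by simp

lemma additive_uminus: "additive f \<Longrightarrow> f (- x) = - f x"
  using additive_add[of f x "- x"] additive_zero[of f] by (metis add.right_inverse minus_unique)

lemma additive_diff: "additive f \<Longrightarrow> f (x - y) = f x - f y"
  using additive_add[of f x "- y"] additive_uminus[of f y] by simp

lemmas additive_simps = additive_add additive_zero additive_uminus additive_diff

lemma quasi_iso_section:
  assumes "chain_map bL bM f" and "chain_map bM bL g"
    and gf: "\<And>x. g (f x) = x"
    and fg: "\<And>x. f (g x) = x + bM (H x) + H (bM x)"
    and "additive H"
  shows "quasi_iso bL bM f"
proof -
  have g_chain: "\<And>x. g (bM x) = bL (g x)" and "additive g"
    using assms(2) unfolding chain_map_def by auto
  show ?thesis
    unfolding quasi_iso_def
  proof (intro conjI allI impI)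
    fix z assume "bL z = 0 \<and> (\<exists>y. f z = bM y)"
    then obtain y where "f z = bM y" by auto
    then have "z = bL (g y)" using gf g_chain by metis
    then show "\<exists>x. z = bL x" ..
  next
    fix w assume w: "bM w = 0"
    have "bL (g w) = 0" using g_chain[of w] w additive_zero[OF \<open>additive g\<close>] by simp
    moreover have "f (g w) - w = bM (H w)" using fg w additive_zero[OF \<open>additive H\<close>] by simp
    ultimately show "\<exists>z. bL z = 0 \<and> (\<exists>y. f z - w = bM y)" by blast
  qed (fact assms(1))
qed

lemma quasi_iso_retraction:
  assumes "is_differential bL" and "is_differential bM"
    and "chain_map bL bM f" and "chain_map bM bL g"
    and gf: "\<And>x. g (f x) = x"
    and fg: "\<And>x. f (g x) = x + bM (H x) + H (bM x)"
    and "additive H"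
  shows "quasi_iso bM bL g"
proof -
  have "additive bL" "additive bM"
    using assms(1,2) unfolding is_differential_def by auto
  have f_chain: "\<And>x. f (bL x) = bM (f x)" and "additive f"
    using assms(3) unfolding chain_map_def by auto
  show ?thesis
    unfolding quasi_iso_def
  proof (intro conjI allI impI)
    fix z assume "bM z = 0 \<and> (\<exists>y. g z = bL y)"
    then obtain y where z: "bM z = 0" and y: "g z = bL y" by auto
    have "z = f (g z) - bM (H z)" using fg[of z] z additive_zero[OF \<open>additive H\<close>] by simp
    also have "\<dots> = bM (f y - H z)" using y f_chain additive_diff[OF \<open>additive bM\<close>] by simp
    finally show "\<exists>x. z = bM x" ..
  next
    fix w assume "bL w = 0"
    then have "bM (f w) = 0" using f_chain[of w] additive_zero[OF \<open>additive f\<close>] by simp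
    moreover have "g (f w) - w = bL 0" using gf additive_zero[OF \<open>additive bL\<close>] by simp
    ultimately show "\<exists>z. bM z = 0 \<and> (\<exists>y. g z - w = bL y)" by blast
  qed (fact assms(4))
qed

lemma DR_data_iff:
  "DR_data bL bM i p h \<longleftrightarrow>
     is_differential bL \<and> is_differential bM \<and> chain_map bL bM i \<and> chain_map bM bL p
     \<and> additive h \<and> (\<forall>x. i (p x) = x + bM (h x) + h (bM x)) \<and> (\<forall>x. p (i x) = x)"
  using quasi_iso_section[of bL bM i p h] quasi_iso_retraction[of bL bM i p h]
  unfolding DR_data_def HE_data_def quasi_iso_def by blast

locale small_perturbed_complex =
  fixes b h \<delta> :: "'m::ab_group_add \<Rightarrow> 'm"
  assumes differential: "is_differential b"
    and additive_h: "additive h"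
    and small: "small_perturbation b h \<delta>"
begin

abbreviation "A \<equiv> pert_A h \<delta>"

lemma additive_b: "additive b"
  and square_zero: "b (b x) = 0"
  using differential unfolding is_differential_def by auto

lemma additive_delta: "additive \<delta>"
  and bij_one_minus_delta_h: "bij (\<lambda>x. x - \<delta> (h x))"
  using small unfolding small_perturbation_def perturbation_def by auto

lemmas linear_simps =
  additive_simps[OF additive_b] additive_simps[OF additive_h] additive_simps[OF additive_delta]

lemma perturbed_square_zero: "b (\<delta> x) + \<delta> (b x) + \<delta> (\<delta> x) = 0"
proof -
  have "b (b x + \<delta> x) + \<delta> (b x + \<delta> x) = 0"
    using small unfolding small_perturbation_def perturbation_def is_differential_def by auto
  then show ?thesis by (simp add: linear_simps square_zero algebra_simps)
qed

lemma cancel_one_minus_delta_h: "u - \<delta> (h u) = v - \<delta> (h v) \<Longrightarrow> u = v"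
  using bij_is_inj[OF bij_one_minus_delta_h] by (auto dest: injD)

lemma pert_A_eq_left: "A x - \<delta> (h (A x)) = \<delta> x"
  using surj_f_inv_f[OF bij_is_surj[OF bij_one_minus_delta_h]] unfolding pert_A_def by metis

lemma additive_A: "additive A"
  unfolding additive_def
proof (intro allI)
  fix x y
  have "(A x + A y) - \<delta> (h (A x + A y)) = (A x - \<delta> (h (A x))) + (A y - \<delta> (h (A y)))"
    by (simp add: linear_simps algebra_simps)
  also have "\<dots> = A (x + y) - \<delta> (h (A (x + y)))"
    by (simp add: pert_A_eq_left linear_simps)
  finally show "A (x + y) = A x + A y"
    by (rule cancel_one_minus_delta_h[symmetric])
qed

lemmas linear_A_simps = additive_simps[OF additive_A]

lemma pert_A_eq_right: "A x - A (h (\<delta> x)) = \<delta> x"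
proof (rule cancel_one_minus_delta_h)
  have "(A x - A (h (\<delta> x))) - \<delta> (h (A x - A (h (\<delta> x))))
      = (A x - \<delta> (h (A x))) - (A (h (\<delta> x)) - \<delta> (h (A (h (\<delta> x)))))"
    by (simp add: linear_simps algebra_simps)
  also have "\<dots> = \<delta> x - \<delta> (h (\<delta> x))"
    by (simp only: pert_A_eq_left)
  finally show "A x - A (h (\<delta> x)) - \<delta> (h (A x - A (h (\<delta> x)))) = \<delta> x - \<delta> (h (\<delta> x))" .
qed

lemma pert_A_curvature: "b (A v) + A (b v + A v + b (h (A v)) + h (b (A v))) = 0"
proof -
  define z where "z = v + h (A v)"
  have v: "v = z - h (\<delta> z)"
    using arg_cong[OF pert_A_eq_left[of v], of h] by (simp add: z_def linear_simps algebra_simps)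
  have Av: "A v = \<delta> z"
    using pert_A_eq_right[of z] by (simp add: v linear_A_simps)
  define w where "w = b z + \<delta> z + h (b (\<delta> z))"
  have lhs: "b (A v) + A (b v + A v + b (h (A v)) + h (b (A v))) = b (\<delta> z) + A w"
    unfolding Av w_def by (simp add: v linear_simps linear_A_simps algebra_simps)
  have "(b (\<delta> z) + A w) - \<delta> (h (b (\<delta> z) + A w))
      = b (\<delta> z) - \<delta> (h (b (\<delta> z))) + (A w - \<delta> (h (A w)))"
    by (simp add: linear_simps algebra_simps)
  also have "\<dots> = b (\<delta> z) + \<delta> (b z) + \<delta> (\<delta> z)"
    unfolding pert_A_eq_left w_def by (simp add: linear_simps)
  also have "\<dots> = 0 - \<delta> (h 0)"
    using perturbed_square_zero[of z] by (simp add: linear_simps)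
  finally show ?thesis
    unfolding lhs by (rule cancel_one_minus_delta_h)
qed

end

locale HE_perturbation = small_perturbed_complex bM h \<delta>
  for bM h \<delta> :: "'m::ab_group_add \<Rightarrow> 'm" +
  fixes bL :: "'l::ab_group_add \<Rightarrow> 'l" and i :: "'l \<Rightarrow> 'm" and p :: "'m \<Rightarrow> 'l"
  assumes HE: "HE_data bL bM i p h"
begin

abbreviation "b\<^sub>1 \<equiv> pert_bL bL i p h \<delta>"
abbreviation "i\<^sub>1 \<equiv> pert_i i h \<delta>"
abbreviation "p\<^sub>1 \<equiv> pert_p p h \<delta>"
abbreviation "h\<^sub>1 \<equiv> pert_h h \<delta>"

lemma additive_bL: "additive bL"
  and square_zero_L: "bL (bL x) = 0"
  and additive_i: "additive i"
  and chain_i: "i (bL x) = bM (i x)"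
  and additive_p: "additive p"
  and chain_p: "bL (p y) = p (bM y)"
  and homotopy: "i (p y) = y + bM (h y) + h (bM y)"
  using HE unfolding HE_data_def quasi_iso_def chain_map_def is_differential_def by auto

lemmas HE_simps =
  linear_simps linear_A_simps additive_simps[OF additive_bL] additive_simps[OF additive_i]
  additive_simps[OF additive_p] chain_i chain_p homotopy

lemma pert_A_curvature_HE: "bM (A v) + A (bM v) + A (i (p (A v))) = 0"
  using pert_A_curvature[of v] by (simp add: homotopy linear_A_simps algebra_simps)

lemma is_differential_pert: "is_differential b\<^sub>1"
  unfolding is_differential_def additive_def pert_bL_def
proof (intro conjI allI)
  fix x
  have "bL (bL x + p (A (i x))) + p (A (i (bL x + p (A (i x)))))
      = bL (bL x) + p (bM (A (i x)) + A (bM (i x)) + A (i (p (A (i x)))))"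
    by (simp add: HE_simps algebra_simps)
  then show "bL (bL x + p (A (i x))) + p (A (i (bL x + p (A (i x))))) = 0"
    by (simp add: square_zero_L pert_A_curvature_HE additive_zero[OF additive_p])
qed (simp add: HE_simps)

lemma chain_map_pert_i: "chain_map b\<^sub>1 (\<lambda>x. bM x + \<delta> x) i\<^sub>1"
  unfolding chain_map_def additive_def pert_bL_def pert_i_def
proof (intro conjI allI)
  fix x
  let ?lhs = "i (bL x + p (A (i x))) + h (A (i (bL x + p (A (i x)))))"
  let ?rhs = "bM (i x + h (A (i x))) + \<delta> (i x + h (A (i x)))"
  have "?lhs - ?rhs = (A (i x) - \<delta> (h (A (i x))) - \<delta> (i x))
      + h (bM (A (i x)) + A (bM (i x)) + A (i (p (A (i x)))))"
    by (simp add: HE_simps algebra_simps)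
  also have "\<dots> = 0"
    by (simp add: pert_A_eq_left pert_A_curvature_HE additive_zero[OF additive_h])
  finally show "?lhs = ?rhs" by simp
qed (simp add: HE_simps)

lemma chain_map_pert_p: "chain_map (\<lambda>x. bM x + \<delta> x) b\<^sub>1 p\<^sub>1"
  unfolding chain_map_def additive_def pert_bL_def pert_p_def
proof (intro conjI allI)
  fix x
  let ?lhs = "p (bM x + \<delta> x) + p (A (h (bM x + \<delta> x)))"
  let ?rhs = "bL (p x + p (A (h x))) + p (A (i (p x + p (A (h x)))))"
  have "?lhs - ?rhs = - p (A x - A (h (\<delta> x)) - \<delta> x)
      - p (bM (A (h x)) + A (bM (h x)) + A (i (p (A (h x)))))"
    by (simp add: HE_simps algebra_simps)
  also have "\<dots> = 0"
    by (simp add: pert_A_eq_right pert_A_curvature_HE additive_zero[OF additive_p])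
  finally show "?lhs = ?rhs" by simp
qed (simp add: HE_simps)

lemma additive_pert_h: "additive h\<^sub>1"
  unfolding additive_def pert_h_def by (simp add: HE_simps)

lemma homotopy_pert: "i\<^sub>1 (p\<^sub>1 x) = x + (bM (h\<^sub>1 x) + \<delta> (h\<^sub>1 x)) + h\<^sub>1 (bM x + \<delta> x)"
proof -
  let ?rhs = "x + (bM (h\<^sub>1 x) + \<delta> (h\<^sub>1 x)) + h\<^sub>1 (bM x + \<delta> x)"
  have "i\<^sub>1 (p\<^sub>1 x) - ?rhs = (A (h x) - \<delta> (h (A (h x))) - \<delta> (h x))
      + h (A x - A (h (\<delta> x)) - \<delta> x)
      + h (bM (A (h x)) + A (bM (h x)) + A (i (p (A (h x)))))"
    unfolding pert_i_def pert_p_def pert_h_def by (simp add: HE_simps algebra_simps)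
  also have "\<dots> = 0"
    by (simp add: pert_A_eq_left pert_A_eq_right pert_A_curvature_HE additive_zero[OF additive_h])
  finally show ?thesis by simp
qed

lemma pert_p_pert_i:
  "p\<^sub>1 (i\<^sub>1 x) = p (i x) + p (A (h (h (A (i x)))) + A (h (i x)) + h (A (i x)))"
  unfolding pert_i_def pert_p_def by (simp add: HE_simps algebra_simps)

lemma DR_data_pert_iff:
  "DR_data b\<^sub>1 (\<lambda>x. bM x + \<delta> x) i\<^sub>1 p\<^sub>1 h\<^sub>1 \<longleftrightarrow> (\<forall>x. p\<^sub>1 (i\<^sub>1 x) = x)"
  using is_differential_pert small chain_map_pert_i chain_map_pert_p additive_pert_h homotopy_pert
  unfolding DR_data_iff small_perturbation_def perturbation_def by blast

end

theorem mainTheorem2: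
  fixes bL :: "'l::ab_group_add \<Rightarrow> 'l" and bM :: "'m::ab_group_add \<Rightarrow> 'm"
    and i :: "'l \<Rightarrow> 'm" and p :: "'m \<Rightarrow> 'l" and h :: "'m \<Rightarrow> 'm" and \<delta> :: "'m \<Rightarrow> 'm"
  assumes "DR_data bL bM i p h"
    and "small_perturbation bM h \<delta>"
  shows "DR_data (pert_bL bL i p h \<delta>) (\<lambda>x. bM x + \<delta> x)
            (pert_i i h \<delta>) (pert_p p h \<delta>) (pert_h h \<delta>)
         \<longleftrightarrow> (\<forall>x. p (pert_A h \<delta> (h (h (pert_A h \<delta> (i x))))
                     + pert_A h \<delta> (h (i x)) + h (pert_A h \<delta> (i x))) = 0)"
proof -
  have HE: "HE_data bL bM i p h"
    using assms(1) unfolding DR_data_def by blast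
  interpret HE_perturbation bM h \<delta> bL i p
    using HE assms(2) by unfold_locales (simp_all add: HE_data_def)
  have "p (i x) = x" for x
    using assms(1) unfolding DR_data_def by blast
  then show ?thesis
    unfolding DR_data_pert_iff pert_p_pert_i by simp
qed

end
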